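(* Let $P\subset\mathbb R^n$ be a bounded open convex set and let $\phi\in L^1(P)$ be a convex function with $\int_P\phi\,d\mu=0$, where $\mu$ is Lebesgue measure. Then $$-\frac{2}{n+1}\left(\frac{n}{n+1}\right)^n\inf_P\phi\;\le\;\frac{1}{\mu(P)}\int_P|\phi|\,d\mu\;\le\;-2\inf_P\phi .$$ Both constants are sharp: for each $n$ the constant $\frac{2}{n+1}\left(\frac{n}{n+1}\right)^n$ cannot be replaced by a larger one and the constant $2$ cannot be replaced by a smaller one (in the class of all such pairs $P,\phi$ in $\mathbb R^n$).
   Context: $\mu$ denotes Lebesgue measure on $\mathbb R^n$. *)

theory Defs
  imports "HOL-Analysis.Analysis"
begin

definition admissible :: "'a::euclidean_space set \<Rightarrow> ('a \<Rightarrow> real) \<Rightarrow> bool" where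
  "admissible P \<phi> \<longleftrightarrow> bounded P \<and> open P \<and> convex P \<and> P \<noteq> {} \<and>
     convex_on P \<phi> \<and> set_integrable lebesgue P \<phi> \<and> (LINT x:P|lebesgue. \<phi> x) = 0"

definition avg_abs :: "'a::euclidean_space set \<Rightarrow> ('a \<Rightarrow> real) \<Rightarrow> real" where
  "avg_abs P \<phi> = (LINT x:P|lebesgue. \<bar>\<phi> x\<bar>) / measure lebesgue P"

end

theory Submission
  imports Defs
begin

(* Write \<phi> = \<phi>\<^sup>+ - \<phi>\<^sup>-. The mean-zero condition makes the masses of \<phi>\<^sup>+ and \<phi>\<^sup>- equal,
   so avg_abs P \<phi> = 2 (\<integral>\<phi>\<^sup>-) / \<mu>(P), and the upper bound follows from \<phi>\<^sup>- \<le> - inf \<phi>.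

   For the lower bound take x0 with \<phi>(x0) = -a < 0 and put k = \<mu>{\<phi> \<le> 0}. By convexity the
   homothety with centre x0 and ratio 1 - \<theta> maps {\<phi> \<le> s} into {\<phi> \<le> (1 - \<theta>) s - \<theta> a}.
   Hence \<mu>{\<phi> \<le> -t} \<ge> (1 - t/a)^n k for 0 \<le> t \<le> a, and \<mu>{\<phi> \<le> t} \<le> (1 + t/a)^n k for t \<ge> 0.
   By the layer-cake formula the first estimate gives \<integral>\<phi>\<^sup>- \<ge> a k / (n + 1), and the second
   bounds \<integral>\<phi>\<^sup>+ below by the integral of \<mu>(P) - (1 + t/a)^n k over [0, a/n]. If
   k \<ge> (n/(n+1))^n \<mu>(P) the first, and otherwise the second, yields
   \<integral>\<phi>\<^sup>- \<ge> a (n/(n+1))^n \<mu>(P) / (n + 1).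

   The cone |x| - n/(n+1) on the unit ball attains the lower constant, and the plateau functions
   \<kappa> max 0 (|x| - r) - 1 with r \<rightarrow> 1 show that 2 cannot be lowered. *)

lemma sigma_finite_completion:
  assumes "sigma_finite_measure M"
  shows "sigma_finite_measure (completion M)"
proof -
  obtain A where A: "countable A" "A \<subseteq> sets M" "\<Union>A = space M" "\<forall>a\<in>A. emeasure M a \<noteq> \<infinity>"
    using sigma_finite_measure.sigma_finite_countable[OF assms] by blast
  have "\<forall>a\<in>A. emeasure (completion M) a \<noteq> \<infinity>"
    using A by (auto simp: subset_eq)
  with A show ?thesis
    by (intro sigma_finite_measure.intro exI[of _ A]) auto
qed

(* f may change sign: ennreal truncates at 0, so the left-hand side is the mass of f\<^sup>+. *)
lemma nn_integral_layer_cake: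
  fixes f :: "'a \<Rightarrow> real"
  assumes M: "sigma_finite_measure M" and A: "A \<in> sets M" and f: "set_borel_measurable M A f"
  shows "(\<integral>\<^sup>+x\<in>A. ennreal (f x) \<partial>M) = (\<integral>\<^sup>+t\<in>{0<..}. emeasure M {x\<in>A. t \<le> f x} \<partial>lborel)"
proof -
  interpret pair_sigma_finite M lborel
    using M by (intro pair_sigma_finite.intro sigma_finite_lborel)
  define g where "g = (\<lambda>x. indicator A x * f x)"
  have g[measurable]: "g \<in> borel_measurable M"
    using f by (simp add: g_def set_borel_measurable_def)
  define S where "S = {p \<in> space M \<times> UNIV. 0 < snd p \<and> snd p \<le> g (fst p)}"
  have S[measurable]: "S \<in> sets (M \<Otimes>\<^sub>M lborel)"
    unfolding S_def by measurable
  have "(\<integral>\<^sup>+x\<in>A. ennreal (f x) \<partial>M) = (\<integral>\<^sup>+x. ennreal (g x) \<partial>M)"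
    by (intro nn_integral_cong) (auto simp: g_def indicator_def)
  also have "\<dots> = (\<integral>\<^sup>+x. (\<integral>\<^sup>+t. indicator S (x, t) \<partial>lborel) \<partial>M)"
  proof (intro nn_integral_cong)
    fix x assume "x \<in> space M"
    then have "indicator S (x, t) = (indicator {0<..g x} t :: ennreal)" for t
      by (auto simp: S_def indicator_def)
    then show "ennreal (g x) = (\<integral>\<^sup>+t. indicator S (x, t) \<partial>lborel)"
      by (cases "0 \<le> g x") (auto simp: ennreal_neg)
  qed
  also have "\<dots> = (\<integral>\<^sup>+t. (\<integral>\<^sup>+x. indicator S (x, t) \<partial>M) \<partial>lborel)"
    by (rule Fubini'[symmetric]) measurable
  also have "\<dots> = (\<integral>\<^sup>+t\<in>{0<..}. emeasure M {x\<in>A. t \<le> f x} \<partial>lborel)"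
  proof (intro nn_integral_cong)
    fix t :: real
    have "{x\<in>A. t \<le> f x} \<in> sets M" if "0 < t"
    proof -
      have "{x\<in>A. t \<le> f x} = {x\<in>space M. t \<le> g x}"
        using sets.sets_into_space[OF A] that by (auto simp: g_def indicator_def)
      then show ?thesis by simp
    qed
    moreover have "indicator S (x, t) = (indicator {0<..} t * indicator {x\<in>A. t \<le> f x} x :: ennreal)" if "x \<in> space M" for x
      using that sets.sets_into_space[OF A] by (auto simp: S_def g_def indicator_def)
    ultimately show "(\<integral>\<^sup>+x. indicator S (x, t) \<partial>M) = emeasure M {x\<in>A. t \<le> f x} * indicator {0<..} t"
      by (cases "0 < t") (auto cong: nn_integral_cong)
  qed
  finally show ?thesis .
qed

lemma set_nn_integral_Ioc_has_integral:
  fixes f :: "real \<Rightarrow> real"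
  assumes "(f has_integral I) {a..b}" "\<And>t. t \<in> {a..b} \<Longrightarrow> 0 \<le> f t"
  shows "(\<integral>\<^sup>+t\<in>{a<..b}. ennreal (f t) \<partial>lborel) = ennreal I"
proof -
  have "(\<integral>\<^sup>+t\<in>{a<..b}. ennreal (f t) \<partial>lborel) = (\<integral>\<^sup>+t\<in>{a..b}. ennreal (f t) \<partial>lborel)"
    using AE_lborel_singleton[of a] by (intro nn_integral_cong_AE) (auto elim!: eventually_mono simp: indicator_def)
  also have "\<dots> = ennreal I"
    by (rule nn_integral_has_integral_lebesgue'[OF assms(2) assms(1)])
  finally show ?thesis .
qed

lemma has_integral_power_linear:
  fixes \<alpha> \<beta> l u :: real
  assumes "\<alpha> \<noteq> 0" "l \<le> u"
  shows "((\<lambda>t. (\<alpha> * t + \<beta>) ^ n) has_integral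
           ((\<alpha> * u + \<beta>) ^ Suc n - (\<alpha> * l + \<beta>) ^ Suc n) / (\<alpha> * Suc n)) {l..u}"
proof -
  define G where "G t = (\<alpha> * t + \<beta>) ^ Suc n / (\<alpha> * Suc n)" for t
  have "((\<lambda>t. (\<alpha> * t + \<beta>) ^ n) has_integral G u - G l) {l..u}"
  proof (rule fundamental_theorem_of_calculus[OF assms(2)])
    fix t assume "t \<in> {l..u}"
    have "((\<lambda>t. (\<alpha> * t + \<beta>) ^ Suc n) has_real_derivative (1 + real n) * (\<alpha> * (\<alpha> * t + \<beta>) ^ n))
        (at t within {l..u})"
      by (intro DERIV_power_Suc derivative_eq_intros) auto
    then have "(G has_real_derivative (\<alpha> * t + \<beta>) ^ n) (at t within {l..u})"
      unfolding G_def using assms(1) by (auto dest: DERIV_cdivide[where c = "\<alpha> * Suc n"])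
    then show "(G has_vector_derivative (\<alpha> * t + \<beta>) ^ n) (at t within {l..u})"
      by (simp add: has_real_derivative_iff_has_vector_derivative)
  qed
  then show ?thesis by (simp add: G_def diff_divide_distrib)
qed

lemma set_integrable_pos_neg_parts:
  fixes f :: "'a \<Rightarrow> real"
  assumes "set_integrable M A f"
  shows "set_integrable M A (\<lambda>x. max 0 (f x))" and "set_integrable M A (\<lambda>x. max 0 (- f x))"
proof -
  have "indicator A x * max 0 (f x) = max 0 (indicator A x * f x)"
    and "indicator A x * max 0 (- f x) = max 0 (- (indicator A x * f x))" for x
    by (simp_all add: indicator_def)
  then show "set_integrable M A (\<lambda>x. max 0 (f x))" "set_integrable M A (\<lambda>x. max 0 (- f x))"
    using assms by (simp_all add: set_integrable_def)
qed

lemma set_nn_integral_eq_set_integral: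
  fixes f :: "'a \<Rightarrow> real"
  assumes "set_integrable M A (\<lambda>x. max 0 (f x))"
  shows "(\<integral>\<^sup>+x\<in>A. ennreal (f x) \<partial>M) = ennreal (LINT x:A|M. max 0 (f x))"
proof -
  have "(\<integral>\<^sup>+x. ennreal (indicator A x * max 0 (f x)) \<partial>M) = ennreal (LINT x:A|M. max 0 (f x))"
    using assms by (subst nn_integral_eq_integral) (auto simp: set_integrable_def set_lebesgue_integral_def)
  moreover have "ennreal (f x) * indicator A x = ennreal (indicator A x * max 0 (f x))" for x
    by (auto simp: indicator_def max_def ennreal_neg)
  ultimately show ?thesis by simp
qed

lemma set_integral_max_0_nonneg:
  fixes f :: "'a \<Rightarrow> real"
  shows "0 \<le> (LINT x:A|M. max 0 (f x))"
  unfolding set_lebesgue_integral_def by (rule Bochner_Integration.integral_nonneg) simp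

lemma set_integral_pos_part_eq_neg_part:
  fixes f :: "'a \<Rightarrow> real"
  assumes f: "set_integrable M A f" and mean_zero: "(LINT x:A|M. f x) = 0"
  shows "(LINT x:A|M. max 0 (f x)) = (LINT x:A|M. max 0 (- f x))"
proof -
  have "f x = max 0 (f x) - max 0 (- f x)" for x
    by (simp add: max_def)
  then have "(LINT x:A|M. f x) = (LINT x:A|M. max 0 (f x) - max 0 (- f x))"
    by simp
  also have "\<dots> = (LINT x:A|M. max 0 (f x)) - (LINT x:A|M. max 0 (- f x))"
    using f by (intro set_integral_diff set_integrable_pos_neg_parts)
  finally show ?thesis
    using mean_zero by simp
qed

lemma continuous_absolutely_integrable_on_bounded:
  fixes f :: "'a::euclidean_space \<Rightarrow> real"
  assumes "continuous_on UNIV f" "bounded S" "S \<in> sets lebesgue"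
  shows "f absolutely_integrable_on S"
proof -
  obtain a where "S \<subseteq> cbox (- a) a"
    using bounded_subset_cbox_symmetric[OF assms(2)] by blast
  moreover have "f absolutely_integrable_on cbox (- a) a"
    by (rule absolutely_integrable_continuous, rule continuous_on_subset[OF assms(1)]) simp
  ultimately show ?thesis
    by (intro set_integrable_subset[OF _ assms(3)])
qed

lemma convex_on_max:
  assumes "convex_on S f" "convex_on S g"
  shows "convex_on S (\<lambda>x. max (f x) (g x))"
proof (rule convex_onI)
  show "convex S" using assms(1) by (rule convex_on_imp_convex)
  fix t :: real and x y assume t: "0 < t" "t < 1" and xy: "x \<in> S" "y \<in> S"
  let ?z = "(1 - t) *\<^sub>R x + t *\<^sub>R y" and ?m = "(1 - t) * max (f x) (g x) + t * max (f y) (g y)"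
  have "f ?z \<le> (1 - t) * f x + t * f y" "g ?z \<le> (1 - t) * g x + t * g y"
    using convex_onD[OF assms(1), of t x y] convex_onD[OF assms(2), of t x y] t xy by auto
  moreover have "(1 - t) * f x + t * f y \<le> ?m" "(1 - t) * g x + t * g y \<le> ?m"
    using t by (intro add_mono mult_left_mono; simp)+
  ultimately show "max (f ?z) (g ?z) \<le> ?m"
    by linarith
qed

context
  fixes P :: "'a::euclidean_space set" and \<phi> :: "'a \<Rightarrow> real"
  assumes P: "P \<in> sets lebesgue" "emeasure lebesgue P < \<infinity>" "convex P"
    and \<phi>: "convex_on P \<phi>" "set_borel_measurable lebesgue P \<phi>"
begin

lemma level_sets_lebesgue:
  shows "{x\<in>P. \<phi> x \<le> s} \<in> sets lebesgue" and "{x\<in>P. s \<le> \<phi> x} \<in> sets lebesgue"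
proof -
  have [measurable]: "(\<lambda>x. indicator P x *\<^sub>R \<phi> x) \<in> borel_measurable lebesgue" "P \<in> sets lebesgue"
    using P(1) \<phi>(2) by (simp_all add: set_borel_measurable_def)
  have "{x\<in>P. \<phi> x \<le> s} = P \<inter> {x. indicator P x *\<^sub>R \<phi> x \<le> s}"
    by (auto simp: indicator_def)
  also have "\<dots> \<in> sets lebesgue"
    by measurable
  finally show "{x\<in>P. \<phi> x \<le> s} \<in> sets lebesgue" .
  have "{x\<in>P. s \<le> \<phi> x} = P \<inter> {x. s \<le> indicator P x *\<^sub>R \<phi> x}"
    by (auto simp: indicator_def)
  also have "\<dots> \<in> sets lebesgue"
    by measurable
  finally show "{x\<in>P. s \<le> \<phi> x} \<in> sets lebesgue" .
qed

lemma emeasure_subset_eq_measure: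
  assumes "S \<in> sets lebesgue" "S \<subseteq> P"
  shows "emeasure lebesgue S = ennreal (measure lebesgue S)"
  using emeasure_mono[OF assms(2) P(1)] P(2) by (intro emeasure_eq_ennreal_measure) auto

lemma emeasure_sublevel_eq_measure:
  "emeasure lebesgue {x\<in>P. \<phi> x \<le> s} = ennreal (measure lebesgue {x\<in>P. \<phi> x \<le> s})"
  using level_sets_lebesgue(1) by (rule emeasure_subset_eq_measure) auto

lemma measure_sublevel_homothety:
  assumes "z \<in> P" "0 \<le> \<theta>" "\<theta> \<le> 1"
  shows "(1 - \<theta>) ^ DIM('a) * measure lebesgue {x\<in>P. \<phi> x \<le> s}
           \<le> measure lebesgue {x\<in>P. \<phi> x \<le> (1 - \<theta>) * s + \<theta> * \<phi> z}"
proof -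
  let ?L = "{x\<in>P. \<phi> x \<le> s}" and ?L' = "{x\<in>P. \<phi> x \<le> (1 - \<theta>) * s + \<theta> * \<phi> z}"
  have "(\<lambda>y. (1 - \<theta>) *\<^sub>R y + \<theta> *\<^sub>R z) ` ?L \<subseteq> ?L'"
  proof clarify
    fix y assume y: "y \<in> P" "\<phi> y \<le> s"
    have "\<phi> ((1 - \<theta>) *\<^sub>R y + \<theta> *\<^sub>R z) \<le> (1 - \<theta>) * \<phi> y + \<theta> * \<phi> z"
      using convex_onD[OF \<phi>(1), of \<theta> y z] assms y by simp
    also have "\<dots> \<le> (1 - \<theta>) * s + \<theta> * \<phi> z"
      using assms y by (simp add: mult_left_mono)
    finally show "(1 - \<theta>) *\<^sub>R y + \<theta> *\<^sub>R z \<in> P \<and> \<phi> ((1 - \<theta>) *\<^sub>R y + \<theta> *\<^sub>R z) \<le> (1 - \<theta>) * s + \<theta> * \<phi> z"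
      using convexD[OF P(3) y(1) assms(1), of "1 - \<theta>" \<theta>] assms by simp
  qed
  from emeasure_mono[OF this level_sets_lebesgue(1)]
  have "ennreal ((1 - \<theta>) ^ DIM('a)) * emeasure lebesgue ?L \<le> emeasure lebesgue ?L'"
    using assms(3) by (simp add: emeasure_lebesgue_affine)
  then show ?thesis
    unfolding emeasure_sublevel_eq_measure using assms(3) by (simp add: ennreal_mult'[symmetric])
qed

context
  fixes x0 :: 'a and a :: real
  assumes x0: "x0 \<in> P" "\<phi> x0 = - a" and a: "0 < a"
begin

lemma measure_sublevel_neg_ge:
  assumes "0 \<le> t" "t \<le> a"
  shows "(1 - t / a) ^ DIM('a) * measure lebesgue {x\<in>P. \<phi> x \<le> 0} \<le> measure lebesgue {x\<in>P. \<phi> x \<le> - t}"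
proof -
  have "(1 - t / a) * 0 + t / a * \<phi> x0 = - t"
    using x0 a by simp
  then show ?thesis
    using measure_sublevel_homothety[OF x0(1), of "t / a" 0] assms a by simp
qed

lemma measure_sublevel_pos_le:
  assumes "0 \<le> t"
  shows "measure lebesgue {x\<in>P. \<phi> x \<le> t} \<le> (1 + t / a) ^ DIM('a) * measure lebesgue {x\<in>P. \<phi> x \<le> 0}"
proof -
  define \<theta> where "\<theta> = t / (a + t)"
  have "0 < a + t" "0 < a * a + a * t"
    using a assms by (auto intro: add_pos_nonneg)
  then have \<theta>: "0 \<le> \<theta>" "\<theta> \<le> 1" "(1 - \<theta>) * t + \<theta> * \<phi> x0 = 0" "(1 + t / a) * (1 - \<theta>) = 1"
    using a assms x0(2) by (simp_all add: \<theta>_def field_simps)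
  have "measure lebesgue {x\<in>P. \<phi> x \<le> t}
      = (1 + t / a) ^ DIM('a) * ((1 - \<theta>) ^ DIM('a) * measure lebesgue {x\<in>P. \<phi> x \<le> t})"
    by (simp only: mult.assoc[symmetric] power_mult_distrib[symmetric] \<theta>(4)) simp
  also have "\<dots> \<le> (1 + t / a) ^ DIM('a) * measure lebesgue {x\<in>P. \<phi> x \<le> 0}"
    using measure_sublevel_homothety[OF x0(1) \<theta>(1,2), of t] \<theta>(3) a assms
    by (intro mult_left_mono) auto
  finally show ?thesis .
qed

lemma nn_integral_neg_part_ge_sublevel:
  defines "k \<equiv> measure lebesgue {x\<in>P. \<phi> x \<le> 0}"
  shows "ennreal (a * k / (real DIM('a) + 1)) \<le> (\<integral>\<^sup>+x\<in>P. ennreal (- \<phi> x) \<partial>lebesgue)"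
proof -
  have "((\<lambda>t. (- (1 / a) * t + 1) ^ DIM('a)) has_integral a / (real DIM('a) + 1)) {0..a}"
    using has_integral_power_linear[of "- (1 / a)" 0 a 1 "DIM('a)"] a by (simp add: field_simps)
  from has_integral_mult_left[OF this, of k]
  have "((\<lambda>t. (1 - t / a) ^ DIM('a) * k) has_integral a * k / (real DIM('a) + 1)) {0..a}"
    by (simp add: field_simps)
  then have "ennreal (a * k / (real DIM('a) + 1))
      = (\<integral>\<^sup>+t\<in>{0<..a}. ennreal ((1 - t / a) ^ DIM('a) * k) \<partial>lborel)"
    using a by (intro set_nn_integral_Ioc_has_integral[symmetric]) (auto simp: k_def)
  also have "\<dots> \<le> (\<integral>\<^sup>+t\<in>{0<..}. emeasure lebesgue {x\<in>P. t \<le> - \<phi> x} \<partial>lborel)"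
  proof (intro nn_integral_mono)
    fix t :: real
    have "ennreal ((1 - t / a) ^ DIM('a) * k) \<le> emeasure lebesgue {x\<in>P. t \<le> - \<phi> x}" if "0 < t" "t \<le> a"
    proof -
      have "ennreal ((1 - t / a) ^ DIM('a) * k) \<le> ennreal (measure lebesgue {x\<in>P. \<phi> x \<le> - t})"
        using measure_sublevel_neg_ge[of t] that by (intro ennreal_leI) (simp add: k_def)
      also have "\<dots> = emeasure lebesgue {x\<in>P. \<phi> x \<le> - t}"
        by (rule emeasure_sublevel_eq_measure[symmetric])
      also have "{x\<in>P. \<phi> x \<le> - t} = {x\<in>P. t \<le> - \<phi> x}"
        by auto
      finally show ?thesis .
    qed
    then show "ennreal ((1 - t / a) ^ DIM('a) * k) * indicator {0<..a} t
        \<le> emeasure lebesgue {x\<in>P. t \<le> - \<phi> x} * indicator {0<..} t"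
      by (auto simp: indicator_def)
  qed
  also have "\<dots> = (\<integral>\<^sup>+x\<in>P. ennreal (- \<phi> x) \<partial>lebesgue)"
    using \<phi>(2) P(1)
    by (intro nn_integral_layer_cake[symmetric] sigma_finite_completion sigma_finite_lborel)
       (auto simp: set_borel_measurable_def)
  finally show ?thesis .
qed

lemma nn_integral_pos_part_ge:
  defines "n \<equiv> real DIM('a)" and "k \<equiv> measure lebesgue {x\<in>P. \<phi> x \<le> 0}" and "V \<equiv> measure lebesgue P"
  assumes k: "k \<le> (n / (n + 1)) ^ DIM('a) * V"
  shows "ennreal (a * V / n - a * k * ((1 + 1 / n) ^ Suc DIM('a) - 1) / (n + 1))
           \<le> (\<integral>\<^sup>+x\<in>P. ennreal (\<phi> x) \<partial>lebesgue)"
proof -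
  have n: "0 < n" by (simp add: n_def)
  have "((\<lambda>t. (1 / a * t + 1) ^ DIM('a)) has_integral a * ((1 + 1 / n) ^ Suc DIM('a) - 1) / (n + 1)) {0..a / n}"
    using has_integral_power_linear[of "1 / a" 0 "a / n" 1 "DIM('a)"] a n by (simp add: field_simps n_def)
  from has_integral_diff[OF has_integral_const_real[of V 0 "a / n"] has_integral_mult_left[OF this, of k]]
  have "((\<lambda>t. V - (1 + t / a) ^ DIM('a) * k) has_integral
          a * V / n - a * k * ((1 + 1 / n) ^ Suc DIM('a) - 1) / (n + 1)) {0..a / n}"
    using a n by (simp add: field_simps)
  moreover have "(1 + t / a) ^ DIM('a) * k \<le> V" if "t \<in> {0..a / n}" for t
  proof -
    have "(1 + t / a) ^ DIM('a) * k \<le> (1 + 1 / n) ^ DIM('a) * ((n / (n + 1)) ^ DIM('a) * V)"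
      using that a n k by (intro mult_mono power_mono) (auto simp: k_def field_simps)
    also have "\<dots> = ((1 + 1 / n) * (n / (n + 1))) ^ DIM('a) * V"
      by (simp only: power_mult_distrib mult.assoc)
    also have "\<dots> = V"
      using n by (simp add: divide_simps)
    finally show ?thesis .
  qed
  ultimately have "ennreal (a * V / n - a * k * ((1 + 1 / n) ^ Suc DIM('a) - 1) / (n + 1))
      = (\<integral>\<^sup>+t\<in>{0<..a / n}. ennreal (V - (1 + t / a) ^ DIM('a) * k) \<partial>lborel)"
    by (intro set_nn_integral_Ioc_has_integral[symmetric]) auto
  also have "\<dots> \<le> (\<integral>\<^sup>+t\<in>{0<..}. emeasure lebesgue {x\<in>P. t \<le> \<phi> x} \<partial>lborel)"
  proof (intro nn_integral_mono)
    fix t :: real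
    let ?L = "{x\<in>P. \<phi> x \<le> t}"
    have "ennreal (V - (1 + t / a) ^ DIM('a) * k) \<le> emeasure lebesgue {x\<in>P. t \<le> \<phi> x}" if "0 < t"
    proof -
      have "V - (1 + t / a) ^ DIM('a) * k \<le> measure lebesgue (P - ?L)"
        using measure_sublevel_pos_le[of t] that P(1,2) level_sets_lebesgue(1)
        by (subst measure_Diff) (auto simp: V_def k_def)
      then have "ennreal (V - (1 + t / a) ^ DIM('a) * k) \<le> ennreal (measure lebesgue (P - ?L))"
        by (rule ennreal_leI)
      also have "\<dots> = emeasure lebesgue (P - ?L)"
        using P(1) level_sets_lebesgue(1) by (intro emeasure_subset_eq_measure[symmetric]) auto
      also have "\<dots> \<le> emeasure lebesgue {x\<in>P. t \<le> \<phi> x}"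
        using level_sets_lebesgue(2) that by (intro emeasure_mono) auto
      finally show ?thesis .
    qed
    then show "ennreal (V - (1 + t / a) ^ DIM('a) * k) * indicator {0<..a / n} t
        \<le> emeasure lebesgue {x\<in>P. t \<le> \<phi> x} * indicator {0<..} t"
      by (auto simp: indicator_def)
  qed
  also have "\<dots> = (\<integral>\<^sup>+x\<in>P. ennreal (\<phi> x) \<partial>lebesgue)"
    using \<phi>(2) P(1) by (intro nn_integral_layer_cake[symmetric] sigma_finite_completion sigma_finite_lborel)
  finally show ?thesis .
qed

lemma nn_integral_neg_part_ge:
  defines "n \<equiv> real DIM('a)" and "V \<equiv> measure lebesgue P"
  assumes balanced: "(\<integral>\<^sup>+x\<in>P. ennreal (\<phi> x) \<partial>lebesgue) \<le> (\<integral>\<^sup>+x\<in>P. ennreal (- \<phi> x) \<partial>lebesgue)"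
  shows "ennreal (a * (n / (n + 1)) ^ DIM('a) * V / (n + 1)) \<le> (\<integral>\<^sup>+x\<in>P. ennreal (- \<phi> x) \<partial>lebesgue)"
proof -
  define k where "k = measure lebesgue {x\<in>P. \<phi> x \<le> 0}"
  define H where "H = (n / (n + 1)) ^ DIM('a)"
  define Q where "Q = (1 + 1 / n) ^ Suc DIM('a)"
  have n: "0 < n" by (simp add: n_def)
  consider "H * V \<le> k" | "k \<le> H * V" by linarith
  then show ?thesis
  proof cases
    case 1
    then have "ennreal (a * H * V / (n + 1)) \<le> ennreal (a * k / (n + 1))"
      using a n by (intro ennreal_leI) (simp add: divide_right_mono)
    also have "\<dots> \<le> (\<integral>\<^sup>+x\<in>P. ennreal (- \<phi> x) \<partial>lebesgue)"
      using nn_integral_neg_part_ge_sublevel by (simp add: k_def n_def)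
    finally show ?thesis
      by (simp add: H_def)
  next
    case 2
    have "H * Q = ((n / (n + 1)) * (1 + 1 / n)) ^ DIM('a) * (1 + 1 / n)"
      by (simp only: H_def Q_def power_Suc power_mult_distrib mult_ac)
    also have "\<dots> = 1 + 1 / n"
      using n by (simp add: divide_simps)
    finally have HQ: "H * Q = 1 + 1 / n" .
    have "a * (H * V) * (Q - 1) = a * V * (H * Q) - a * H * V"
      by (simp add: algebra_simps)
    also have "\<dots> = a * V * (n + 1) / n - a * H * V"
      using n by (simp add: HQ field_simps)
    finally have "a * H * V / (n + 1) = a * V / n - a * (H * V) * (Q - 1) / (n + 1)"
      using n by (simp add: field_simps)
    also have "\<dots> \<le> a * V / n - a * k * (Q - 1) / (n + 1)"
      using 2 a n one_le_power[of "1 + 1 / n" "Suc DIM('a)"]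
      by (intro diff_left_mono divide_right_mono mult_right_mono mult_left_mono) (auto simp: Q_def)
    finally have "ennreal (a * H * V / (n + 1)) \<le> (\<integral>\<^sup>+x\<in>P. ennreal (\<phi> x) \<partial>lebesgue)"
      using nn_integral_pos_part_ge 2
      by (auto simp: H_def Q_def k_def n_def V_def intro: ennreal_leI order_trans)
    then show ?thesis
      using balanced by (simp add: H_def)
  qed
qed

end

end

lemma avg_abs_eq_neg_part:
  assumes \<phi>: "set_integrable lebesgue P \<phi>" and mean_zero: "(LINT x:P|lebesgue. \<phi> x) = 0"
  shows "avg_abs P \<phi> = 2 * (LINT x:P|lebesgue. max 0 (- \<phi> x)) / measure lebesgue P"
proof -
  have "\<bar>\<phi> x\<bar> = max 0 (\<phi> x) + max 0 (- \<phi> x)" for x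
    by (simp add: max_def)
  then have "(LINT x:P|lebesgue. \<bar>\<phi> x\<bar>) = (LINT x:P|lebesgue. max 0 (\<phi> x) + max 0 (- \<phi> x))"
    by simp
  also have "\<dots> = (LINT x:P|lebesgue. max 0 (\<phi> x)) + (LINT x:P|lebesgue. max 0 (- \<phi> x))"
    using \<phi> by (intro set_integral_add set_integrable_pos_neg_parts)
  finally show ?thesis
    using set_integral_pos_part_eq_neg_part[OF \<phi> mean_zero] by (simp add: avg_abs_def)
qed

lemma admissible_measure:
  assumes "admissible P \<phi>"
  shows "P \<in> sets lebesgue" and "emeasure lebesgue P < \<infinity>" and "0 < measure lebesgue P"
proof -
  have P: "open P" "bounded P" "P \<noteq> {}"
    using assms by (auto simp: admissible_def)
  then show "P \<in> sets lebesgue"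
    by simp
  show finite: "emeasure lebesgue P < \<infinity>"
    using P emeasure_bounded_finite[of P] by simp
  obtain x e where "0 < e" "ball x e \<subseteq> P"
    using P openE by (metis ex_in_conv)
  then have "0 < measure lebesgue (ball x e)"
    by (simp add: content_ball_pos)
  also have "\<dots> \<le> measure lebesgue P"
    using \<open>ball x e \<subseteq> P\<close> P finite by (intro measure_mono_fmeasurable) (auto simp: fmeasurable_def)
  finally show "0 < measure lebesgue P" .
qed

lemma set_integral_neg_part_ge:
  defines "n \<equiv> real DIM('a::euclidean_space)"
  assumes adm: "admissible P (\<phi> :: 'a \<Rightarrow> real)" and x0: "x0 \<in> P"
  shows "- \<phi> x0 * (n / (n + 1)) ^ DIM('a) * measure lebesgue P / (n + 1)
           \<le> (LINT x:P|lebesgue. max 0 (- \<phi> x))"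
proof (cases "0 \<le> \<phi> x0")
  case True
  then have "- \<phi> x0 * (n / (n + 1)) ^ DIM('a) * measure lebesgue P / (n + 1) \<le> 0"
    by (simp add: n_def)
  also have "0 \<le> (LINT x:P|lebesgue. max 0 (- \<phi> x))"
    by (rule set_integral_max_0_nonneg)
  finally show ?thesis .
next
  case False
  have \<phi>: "set_integrable lebesgue P \<phi>" "(LINT x:P|lebesgue. \<phi> x) = 0" "convex_on P \<phi>" "convex P"
    using adm by (auto simp: admissible_def)
  note P = admissible_measure[OF adm]
  note pos_part = set_nn_integral_eq_set_integral[OF set_integrable_pos_neg_parts(1)[OF \<phi>(1)]]
  note neg_part = set_nn_integral_eq_set_integral[OF set_integrable_pos_neg_parts(2)[OF \<phi>(1)]]
  have "set_borel_measurable lebesgue P \<phi>"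
    using \<phi>(1) by (simp add: set_integrable_def set_borel_measurable_def borel_measurable_integrable)
  then have "ennreal (- \<phi> x0 * (n / (n + 1)) ^ DIM('a) * measure lebesgue P / (n + 1))
      \<le> ennreal (LINT x:P|lebesgue. max 0 (- \<phi> x))"
    using nn_integral_neg_part_ge[OF P(1,2) \<phi>(4,3) _ x0, of "- \<phi> x0"] False
      pos_part neg_part set_integral_pos_part_eq_neg_part[OF \<phi>(1,2)]
    by (simp add: n_def)
  then show ?thesis
    by (simp add: set_integral_max_0_nonneg)
qed

lemma admissible_lower_bound:
  defines "c \<equiv> 2 / (real DIM('a) + 1) * (real DIM('a) / (real DIM('a) + 1)) ^ DIM('a)"
  assumes adm: "admissible P (\<phi> :: 'a::euclidean_space \<Rightarrow> real)" and x0: "x0 \<in> P"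
  shows "- avg_abs P \<phi> / c \<le> \<phi> x0"
proof -
  define V where "V = measure lebesgue P"
  have V: "0 < V"
    using admissible_measure(3)[OF adm] by (simp add: V_def)
  have "c * (- \<phi> x0) = 2 * (- \<phi> x0 * (real DIM('a) / (real DIM('a) + 1)) ^ DIM('a) * V / (real DIM('a) + 1)) / V"
    using V by (simp add: c_def)
  also have "\<dots> \<le> 2 * (LINT x:P|lebesgue. max 0 (- \<phi> x)) / V"
    using set_integral_neg_part_ge[OF adm x0] V unfolding V_def
    by (intro divide_right_mono mult_left_mono) auto
  also have "\<dots> = avg_abs P \<phi>"
    using adm by (simp add: avg_abs_eq_neg_part admissible_def V_def)
  finally have "- avg_abs P \<phi> \<le> \<phi> x0 * c"
    by (simp add: mult.commute)
  moreover have "0 < c" by (simp add: c_def)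
  ultimately show ?thesis
    by (simp only: pos_divide_le_eq)
qed

lemma avg_abs_ge:
  assumes "admissible P (\<phi> :: 'a::euclidean_space \<Rightarrow> real)"
  shows "- (2 / (real DIM('a) + 1)) * (real DIM('a) / (real DIM('a) + 1)) ^ DIM('a) * Inf (\<phi> ` P)
           \<le> avg_abs P \<phi>"
proof -
  define c where "c = 2 / (real DIM('a) + 1) * (real DIM('a) / (real DIM('a) + 1)) ^ DIM('a)"
  have "P \<noteq> {}"
    using assms by (simp add: admissible_def)
  then have "- avg_abs P \<phi> / c \<le> Inf (\<phi> ` P)"
    using admissible_lower_bound[OF assms] by (intro cInf_greatest) (auto simp: c_def)
  moreover have "0 < c" by (simp add: c_def)
  moreover have "- (2 / (real DIM('a) + 1)) * (real DIM('a) / (real DIM('a) + 1)) ^ DIM('a) * Inf (\<phi> ` P)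
      = - (Inf (\<phi> ` P) * c)"
    by (simp add: c_def)
  ultimately show ?thesis
    by (simp only: pos_divide_le_eq)
qed

lemma avg_abs_le:
  assumes adm: "admissible P (\<phi> :: 'a::euclidean_space \<Rightarrow> real)"
  shows "avg_abs P \<phi> \<le> - 2 * Inf (\<phi> ` P)"
proof -
  have \<phi>: "set_integrable lebesgue P \<phi>" "(LINT x:P|lebesgue. \<phi> x) = 0"
    using adm by (auto simp: admissible_def)
  note P = admissible_measure[OF adm]
  have const: "set_integrable lebesgue P (\<lambda>_. c)" for c :: real
    using P(1,2) by (simp add: set_integrable_def)
  define m where "m = Inf (\<phi> ` P)"
  have "bdd_below (\<phi> ` P)"
    using admissible_lower_bound[OF adm] unfolding bdd_below_def by blast
  then have m: "m \<le> \<phi> x" if "x \<in> P" for x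
    using that by (auto simp: m_def intro: cInf_lower)
  have "m * measure lebesgue P = (LINT x:P|lebesgue. m)"
    using P by (simp add: set_integral_const)
  also have "\<dots> \<le> (LINT x:P|lebesgue. \<phi> x)"
    using \<phi>(1) m const by (intro set_integral_mono) auto
  finally have "m \<le> 0"
    using P(3) \<phi>(2) by (simp add: mult_le_0_iff)
  have "(LINT x:P|lebesgue. max 0 (- \<phi> x)) \<le> (LINT x:P|lebesgue. - m)"
    using \<phi>(1) m \<open>m \<le> 0\<close> const by (intro set_integral_mono set_integrable_pos_neg_parts) auto
  also have "\<dots> = - m * measure lebesgue P"
    using P by (simp add: set_integral_const)
  finally show ?thesis
    using P(3) avg_abs_eq_neg_part[OF \<phi>] by (simp add: m_def divide_le_eq)
qed

lemma set_integral_ball_cone: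
  assumes "0 \<le> \<rho>" "\<rho> \<le> 1"
  shows "(LINT x:ball (0::'a::euclidean_space) 1|lebesgue. max 0 (\<rho> - norm x))
           = unit_ball_vol DIM('a) * \<rho> ^ Suc DIM('a) / (real DIM('a) + 1)"
proof -
  let ?w = "unit_ball_vol DIM('a)" and ?B = "ball (0::'a) 1"
  have integrable: "(\<lambda>x. \<rho> - norm x) absolutely_integrable_on ?B"
    and integrable_pos: "(\<lambda>x. max 0 (\<rho> - norm x)) absolutely_integrable_on ?B"
    by (intro continuous_absolutely_integrable_on_bounded continuous_intros; simp)+
  have "((\<lambda>t. (- 1 * t + \<rho>) ^ DIM('a)) has_integral \<rho> ^ Suc DIM('a) / (real DIM('a) + 1)) {0..\<rho>}"
    using has_integral_power_linear[of "- 1" 0 \<rho> \<rho> "DIM('a)"] assms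
    by (simp add: add.commute[of 1] minus_add_distrib[symmetric] del: minus_add_distrib)
  from has_integral_mult_left[OF this, of ?w]
  have "((\<lambda>t. (\<rho> - t) ^ DIM('a) * ?w) has_integral ?w * \<rho> ^ Suc DIM('a) / (real DIM('a) + 1)) {0..\<rho>}"
    by (simp add: mult_ac)
  then have "ennreal (?w * \<rho> ^ Suc DIM('a) / (real DIM('a) + 1))
      = (\<integral>\<^sup>+t\<in>{0<..\<rho>}. ennreal ((\<rho> - t) ^ DIM('a) * ?w) \<partial>lborel)"
    by (intro set_nn_integral_Ioc_has_integral[symmetric]) (auto intro: unit_ball_vol_nonneg)
  also have "\<dots> = (\<integral>\<^sup>+t\<in>{0<..}. emeasure lebesgue {x\<in>?B. t \<le> \<rho> - norm x} \<partial>lborel)"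
  proof (intro nn_integral_cong)
    fix t :: real
    have "{x\<in>?B. t \<le> \<rho> - norm x} = cball 0 (\<rho> - t)" if "0 < t"
      using that assms by auto
    then show "ennreal ((\<rho> - t) ^ DIM('a) * ?w) * indicator {0<..\<rho>} t
        = emeasure lebesgue {x\<in>?B. t \<le> \<rho> - norm x} * indicator {0<..} t"
      by (auto simp: indicator_def emeasure_cball mult.commute)
  qed
  also have "\<dots> = (\<integral>\<^sup>+x\<in>?B. ennreal (\<rho> - norm x) \<partial>lebesgue)"
    using borel_measurable_integrable[OF integrable[unfolded set_integrable_def]]
    by (intro nn_integral_layer_cake[symmetric] sigma_finite_completion sigma_finite_lborel)
       (auto simp: set_borel_measurable_def)
  also have "\<dots> = ennreal (LINT x:?B|lebesgue. max 0 (\<rho> - norm x))"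
    using integrable_pos by (rule set_nn_integral_eq_set_integral)
  finally have eq: "ennreal (?w * \<rho> ^ Suc DIM('a) / (real DIM('a) + 1))
      = ennreal (LINT x:?B|lebesgue. max 0 (\<rho> - norm x))" .
  have nonneg_value: "0 \<le> ?w * \<rho> ^ Suc DIM('a) / (real DIM('a) + 1)"
    using assms unit_ball_vol_nonneg[of "DIM('a)"] by simp
  from eq show ?thesis
    unfolding ennreal_inj[OF nonneg_value set_integral_max_0_nonneg] by (rule sym)
qed

lemma measure_unit_ball: "measure lebesgue (ball (0::'a::euclidean_space) 1) = unit_ball_vol DIM('a)"
  using content_ball[of 1 "0::'a"] by simp

lemma admissible_unit_ball:
  fixes \<phi> :: "'a::euclidean_space \<Rightarrow> real"
  assumes "continuous_on UNIV \<phi>" "convex_on (ball 0 1) \<phi>" "(LINT x:ball 0 1|lebesgue. \<phi> x) = 0"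
  shows "admissible (ball 0 1) \<phi>"
  using assms continuous_absolutely_integrable_on_bounded[OF assms(1), of "ball 0 1"]
  by (simp add: admissible_def)

lemma set_integral_ball_norm:
  "(LINT x:ball (0::'a::euclidean_space) 1|lebesgue. norm x)
     = unit_ball_vol DIM('a) * (real DIM('a) / (real DIM('a) + 1))"
proof -
  let ?B = "ball (0::'a) 1"
  have "(LINT x:?B|lebesgue. norm x) = (LINT x:?B|lebesgue. 1 - max 0 (1 - norm x))"
    by (intro set_lebesgue_integral_cong) auto
  also have "\<dots> = (LINT x:?B|lebesgue. 1) - (LINT x:?B|lebesgue. max 0 (1 - norm x))"
    by (intro set_integral_diff continuous_absolutely_integrable_on_bounded continuous_intros) auto
  also have "\<dots> = unit_ball_vol DIM('a) - unit_ball_vol DIM('a) / (real DIM('a) + 1)"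
    using set_integral_ball_cone[of 1, where 'a='a] measure_unit_ball[where 'a='a]
    by (simp add: set_integral_const emeasure_ball)
  also have "\<dots> = unit_ball_vol DIM('a) * (real DIM('a) / (real DIM('a) + 1))"
    by (simp add: field_simps)
  finally show ?thesis .
qed

lemma cone_example:
  fixes h :: real
  defines "\<phi> \<equiv> \<lambda>x::'a::euclidean_space. norm x - h"
  assumes h: "h = real DIM('a) / (real DIM('a) + 1)"
  shows "admissible (ball 0 1) \<phi>" and "Inf (\<phi> ` ball 0 1) = - h"
    and "avg_abs (ball 0 1) \<phi> = 2 * h ^ Suc DIM('a) / (real DIM('a) + 1)"
proof -
  let ?B = "ball (0::'a) 1"
  have "(LINT x:?B|lebesgue. \<phi> x) = (LINT x:?B|lebesgue. norm x) - (LINT x:?B|lebesgue. h)"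
    unfolding \<phi>_def
    by (intro set_integral_diff continuous_absolutely_integrable_on_bounded continuous_intros) auto
  then have mean_zero: "(LINT x:?B|lebesgue. \<phi> x) = 0"
    using measure_unit_ball[where 'a='a]
    by (simp add: set_integral_ball_norm set_integral_const emeasure_ball h)
  moreover have "convex_on ?B (\<lambda>x. dist 0 x + (- h))"
    by (intro convex_on_add convex_on_dist) (auto simp: convex_on_const)
  moreover have "continuous_on UNIV \<phi>"
    unfolding \<phi>_def by (intro continuous_intros)
  ultimately show adm: "admissible ?B \<phi>"
    by (intro admissible_unit_ball) (simp_all add: \<phi>_def dist_norm)
  show "Inf (\<phi> ` ?B) = - h"
    by (rule cInf_eq_minimum) (auto simp: \<phi>_def image_iff intro: bexI[of _ 0])
  have "max 0 (- \<phi> x) = max 0 (h - norm x)" for x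
    by (simp add: \<phi>_def)
  moreover have "0 \<le> h" "h \<le> 1"
    by (simp_all add: h)
  moreover have "unit_ball_vol DIM('a) \<noteq> 0"
    by (rule less_imp_neq[THEN not_sym]) simp
  ultimately show "avg_abs ?B \<phi> = 2 * h ^ Suc DIM('a) / (real DIM('a) + 1)"
    using avg_abs_eq_neg_part[of ?B \<phi>] adm set_integral_ball_cone[of h, where 'a='a]
      measure_unit_ball[where 'a='a]
    by (simp add: admissible_def)
qed

lemma set_integral_ball_norm_excess:
  assumes "0 \<le> r" "r \<le> 1"
  shows "(LINT x:ball (0::'a::euclidean_space) 1|lebesgue. max 0 (norm x - r))
           = unit_ball_vol DIM('a) * (real DIM('a) - (real DIM('a) + 1) * r + r ^ Suc DIM('a))
               / (real DIM('a) + 1)"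
proof -
  let ?B = "ball (0::'a) 1"
  have integrable: "f absolutely_integrable_on ?B" if "continuous_on UNIV f" for f :: "'a \<Rightarrow> real"
    using that by (rule continuous_absolutely_integrable_on_bounded) auto
  have "(LINT x:?B|lebesgue. max 0 (norm x - r)) = (LINT x:?B|lebesgue. norm x - r + max 0 (r - norm x))"
    by (intro set_lebesgue_integral_cong) (auto simp: max_def)
  also have "\<dots> = (LINT x:?B|lebesgue. norm x) - (LINT x:?B|lebesgue. r)
      + (LINT x:?B|lebesgue. max 0 (r - norm x))"
    using integrable[of norm] integrable[of "\<lambda>_. r"] integrable[of "\<lambda>x. max 0 (r - norm x)"]
    by (simp add: continuous_intros)
  also have "\<dots> = unit_ball_vol DIM('a) * (real DIM('a) - (real DIM('a) + 1) * r + r ^ Suc DIM('a))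
      / (real DIM('a) + 1)"
    using assms measure_unit_ball[where 'a='a] set_integral_ball_cone[of r, where 'a='a]
    by (simp add: set_integral_ball_norm set_integral_const emeasure_ball field_simps)
  finally show ?thesis .
qed

lemma Bernoulli_inequality_strict:
  fixes r :: real
  assumes "0 < n" "0 \<le> r" "r < 1"
  shows "1 + (real n + 1) * (r - 1) < r ^ Suc n"
proof -
  have "1 + real n * (r - 1) \<le> r ^ n"
    using Bernoulli_inequality[of "r - 1" n] assms(2) by simp
  then have "r * (1 + real n * (r - 1)) \<le> r ^ Suc n"
    using assms(2) by (simp add: mult_left_mono)
  moreover have "0 < real n * (1 - r)\<^sup>2"
    using assms by simp
  ultimately show ?thesis
    by (simp add: power2_eq_square algebra_simps)
qed

lemma plateau_example:
  fixes r :: real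
  assumes r: "0 < r" "r < 1"
  obtains \<phi> :: "'a::euclidean_space \<Rightarrow> real"
  where "admissible (ball 0 1) \<phi>" "Inf (\<phi> ` ball 0 1) = - 1" "2 * r ^ DIM('a) \<le> avg_abs (ball 0 1) \<phi>"
proof -
  let ?B = "ball (0::'a) 1" and ?w = "unit_ball_vol DIM('a)" and ?n = "real DIM('a)"
  define J where "J = (LINT x:?B|lebesgue. max 0 (norm x - r))"
  have "0 < ?n - (?n + 1) * r + r ^ Suc DIM('a)"
    using Bernoulli_inequality_strict[of "DIM('a)" r] r by (simp add: algebra_simps)
  then have "0 < J"
    unfolding J_def set_integral_ball_norm_excess[OF r(1)[THEN less_imp_le] r(2)[THEN less_imp_le]]
    by (intro divide_pos_pos mult_pos_pos) simp_all
  have integrable: "f absolutely_integrable_on ?B" if "continuous_on UNIV f" for f :: "'a \<Rightarrow> real"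
    using that by (rule continuous_absolutely_integrable_on_bounded) auto
  define \<phi> where "\<phi> = (\<lambda>x::'a. ?w / J * max 0 (norm x - r) - 1)"
  show ?thesis
  proof
    have "(LINT x:?B|lebesgue. \<phi> x) = ?w / J * J - (LINT x:?B|lebesgue. 1)"
      using integrable[of "\<lambda>x. max 0 (norm x - r)"] integrable[of "\<lambda>_. 1"]
      by (simp add: \<phi>_def J_def continuous_intros)
    then have "(LINT x:?B|lebesgue. \<phi> x) = 0"
      using \<open>0 < J\<close> measure_unit_ball[where 'a='a] by (simp add: set_integral_const emeasure_ball)
    moreover have "convex_on ?B (\<lambda>x. ?w / J * max 0 (dist 0 x + - r) + - 1)"
      using \<open>0 < J\<close>
      by (intro convex_on_add convex_on_cmul convex_on_max convex_on_dist) (auto simp: convex_on_const)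
    moreover have "continuous_on UNIV \<phi>"
      unfolding \<phi>_def by (intro continuous_intros)
    ultimately show adm: "admissible ?B \<phi>"
      by (intro admissible_unit_ball) (simp_all add: \<phi>_def dist_norm)
    show "Inf (\<phi> ` ?B) = - 1"
      using \<open>0 < J\<close> r by (intro cInf_eq_minimum) (auto simp: \<phi>_def image_iff intro!: bexI[of _ 0])
    have "ennreal (?w * r ^ DIM('a)) = (\<integral>\<^sup>+x. indicator (ball (0::'a) r) x \<partial>lebesgue)"
      using r by (simp add: emeasure_ball)
    also have "\<dots> \<le> (\<integral>\<^sup>+x\<in>?B. ennreal (- \<phi> x) \<partial>lebesgue)"
      using r by (intro nn_integral_mono) (auto simp: \<phi>_def indicator_def)
    also have "\<dots> = ennreal (LINT x:?B|lebesgue. max 0 (- \<phi> x))"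
      using adm by (intro set_nn_integral_eq_set_integral set_integrable_pos_neg_parts) (simp add: admissible_def)
    finally have "?w * r ^ DIM('a) \<le> (LINT x:?B|lebesgue. max 0 (- \<phi> x))"
      by (simp add: ennreal_le_iff set_integral_max_0_nonneg)
    then show "2 * r ^ DIM('a) \<le> avg_abs ?B \<phi>"
      using adm avg_abs_eq_neg_part[of ?B \<phi>] measure_unit_ball[where 'a='a]
      by (simp add: admissible_def field_simps)
  qed
qed

lemma lower_constant_sharp:
  assumes c: "2 / (real DIM('a) + 1) * (real DIM('a) / (real DIM('a) + 1)) ^ DIM('a) < c"
  shows "\<exists>(P :: 'a::euclidean_space set) \<phi>. admissible P \<phi> \<and> \<not> (- c * Inf (\<phi> ` P) \<le> avg_abs P \<phi>)"
proof -
  define h where "h = real DIM('a) / (real DIM('a) + 1)"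
  note cone = cone_example[OF h_def]
  have "avg_abs (ball 0 1) (\<lambda>x::'a. norm x - h) = (2 / (real DIM('a) + 1) * h ^ DIM('a)) * h"
    using cone(3) by simp
  also have "\<dots> < c * h"
    using c by (intro mult_strict_right_mono) (simp_all add: h_def)
  finally show ?thesis
    using cone(1,2) by (intro exI[of _ "ball 0 1"] exI[of _ "\<lambda>x::'a. norm x - h"]) simp
qed

lemma upper_constant_sharp:
  assumes c: "c < 2"
  shows "\<exists>(P :: 'a::euclidean_space set) \<phi>. admissible P \<phi> \<and> \<not> (avg_abs P \<phi> \<le> - c * Inf (\<phi> ` P))"
proof -
  define q where "q = (2 + max 0 c) / 4"
  define r where "r = root DIM('a) q"
  have q: "0 < q" "q < 1" "c < 2 * q"
    using c by (auto simp: q_def)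
  then have "r ^ DIM('a) = q" "0 < r" "r < 1"
    by (simp_all add: r_def)
  then obtain \<phi> :: "'a \<Rightarrow> real"
    where "admissible (ball 0 1) \<phi>" "Inf (\<phi> ` ball 0 1) = - 1" "2 * q \<le> avg_abs (ball 0 1) \<phi>"
    using plateau_example[of r] by metis
  then show ?thesis
    using q by (intro exI[of _ "ball 0 1"] exI[of _ \<phi>]) auto
qed

theorem theorem1p2:
  fixes n :: real
  defines "n \<equiv> real DIM('a::euclidean_space)"
  shows
    "(\<forall>(P::'a set) \<phi>. admissible P \<phi> \<longrightarrow>
        - (2 / (n + 1)) * (n / (n + 1)) ^ DIM('a) * Inf (\<phi> ` P) \<le> avg_abs P \<phi>
      \<and> avg_abs P \<phi> \<le> - 2 * Inf (\<phi> ` P))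
   \<and> (\<forall>c. c > (2 / (n + 1)) * (n / (n + 1)) ^ DIM('a) \<longrightarrow>
        (\<exists>(P::'a set) \<phi>. admissible P \<phi> \<and> \<not> (- c * Inf (\<phi> ` P) \<le> avg_abs P \<phi>)))
   \<and> (\<forall>c. c < 2 \<longrightarrow>
        (\<exists>(P::'a set) \<phi>. admissible P \<phi> \<and> \<not> (avg_abs P \<phi> \<le> - c * Inf (\<phi> ` P))))"
  unfolding n_def using avg_abs_ge avg_abs_le lower_constant_sharp upper_constant_sharp by blast

end
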